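(* There exists a simple temporal graph $\mathcal G$ whose strict-journey reachability graph $\mathcal C(\mathcal G)$ is not isomorphic to the non-strict-journey reachability graph of any temporal graph $\mathcal H$. (For instance, $\mathcal G$ the path $a-b-c$ with $\lambda(ab)=\lambda(bc)=\{1\}$.)
   Context: A temporal graph is a triple $\mathcal G=(V,E,\lambda)$ where $V$ is a finite vertex set, $E$ is a set of undirected edges on $V$, and $\lambda:E\to 2^{\mathbb N}\setminus\{\emptyset\}$ assigns to each edge a nonempty set of presence times. The footprint of $\mathcal G$ is the static graph $(V,E)$. A contact is a pair $(e,t)$ with $e\in E$ and $t\in\lambda(e)$. A journey from $u$ to $v$ is a sequence of contacts $(e_1,t_1),\dots,(e_k,t_k)$, $k\ge 1$, such that $e_1,\dots,e_k$ form a path from $u$ to $v$ in the footprint and $t_1\le t_2\le\dots\le t_k$ (a non-strict journey); it is strict if $t_1<t_2<\dots<t_k$. $\mathcal G$ is simple if $|\lambda(e)|=1$ for every edge $e$. The reachability graph $\mathcal C(\mathcal G)$ (with respect to a chosen journey notion) is the directed graph on $V$ having an arc $(u,v)$, $u\neq v$, if and only if there is a journey from $u$ to $v$. Reachability graphs are compared up to isomorphism of directed graphs. *)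

theory Defs
  imports Main
begin

definition temporal_graph :: "'a set \<Rightarrow> 'a set set \<Rightarrow> ('a set \<Rightarrow> nat set) \<Rightarrow> bool" where
  "temporal_graph V E lam \<longleftrightarrow> finite V
     \<and> (\<forall>e\<in>E. \<exists>u v. u \<in> V \<and> v \<in> V \<and> u \<noteq> v \<and> e = {u, v})
     \<and> (\<forall>e\<in>E. lam e \<noteq> {})"

definition simple_tg :: "'a set set \<Rightarrow> ('a set \<Rightarrow> nat set) \<Rightarrow> bool" where
  "simple_tg E lam \<longleftrightarrow> (\<forall>e\<in>E. card (lam e) = 1)"

definition journey :: "bool \<Rightarrow> 'a set set \<Rightarrow> ('a set \<Rightarrow> nat set) \<Rightarrow> 'a \<Rightarrow> 'a \<Rightarrow> bool" where
  "journey strict E lam u v \<longleftrightarrow> (\<exists>vs ts.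
     length vs \<ge> 2 \<and> hd vs = u \<and> last vs = v \<and> distinct vs
     \<and> length ts = length vs - 1
     \<and> (\<forall>i < length ts. {vs ! i, vs ! (i+1)} \<in> E \<and> ts ! i \<in> lam {vs ! i, vs ! (i+1)})
     \<and> (if strict then sorted_wrt (<) ts else sorted ts))"

definition reach_arcs :: "bool \<Rightarrow> 'a set \<Rightarrow> 'a set set \<Rightarrow> ('a set \<Rightarrow> nat set) \<Rightarrow> ('a \<times> 'a) set" where
  "reach_arcs strict V E lam = {(u, v). u \<in> V \<and> v \<in> V \<and> u \<noteq> v \<and> journey strict E lam u v}"

definition digraph_iso :: "'a set \<Rightarrow> ('a \<times> 'a) set \<Rightarrow> 'b set \<Rightarrow> ('b \<times> 'b) set \<Rightarrow> bool" where
  "digraph_iso V1 A1 V2 A2 \<longleftrightarrow> (\<exists>f. bij_betw f V1 V2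
     \<and> (\<forall>u\<in>V1. \<forall>v\<in>V1. (u, v) \<in> A1 \<longleftrightarrow> (f u, f v) \<in> A2))"

end

theory Submission
  imports Defs
begin

text \<open>In the strict setting the path a - b - c with both edges present only at time 1 gives
  arcs between b and each of a and c, but none between a and c. In a non-strict reachability
  graph on three vertices this pattern is impossible: a journey from a to b must start with the
  edge ab (an edge ac would already be a journey from a to c), and likewise a journey from c to
  b starts with cb; whichever of the two edges carries the earlier time can be followed by the
  other one, giving a non-strict journey between a and c.\<close>

lemma journey_edge:
  assumes "{u, v} \<in> F" "t \<in> mu {u, v}" "u \<noteq> v"
  shows "journey strict F mu u v"
  unfolding journey_def
  by (rule exI[of _ "[u, v]"], rule exI[of _ "[t]"]) (use assms in auto)

lemma journey_two_edges:
  assumes "{u, v} \<in> F" "t1 \<in> mu {u, v}" "{v, w} \<in> F" "t2 \<in> mu {v, w}"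
    and "distinct [u, v, w]" "t1 \<le> t2"
  shows "journey False F mu u w"
  unfolding journey_def
  by (rule exI[of _ "[u, v, w]"], rule exI[of _ "[t1, t2]"])
    (use assms in \<open>auto simp: numeral_2_eq_2 less_Suc_eq\<close>)

lemma journey_first_edge:
  assumes "journey strict F mu u v"
  obtains w t where "{u, w} \<in> F" "t \<in> mu {u, w}" "w \<noteq> u"
proof -
  obtain vs ts where vs: "length vs \<ge> 2" "hd vs = u" "distinct vs" "length ts = length vs - 1"
    and edges: "\<forall>i < length ts. {vs ! i, vs ! (i+1)} \<in> F \<and> ts ! i \<in> mu {vs ! i, vs ! (i+1)}"
    using assms unfolding journey_def by blast
  have "vs ! 0 = u" using vs(1,2) by (cases vs) auto
  moreover have "vs ! 1 \<noteq> vs ! 0" using vs(1,3) by (subst nth_eq_iff_index_eq) auto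
  moreover have "{vs ! 0, vs ! 1} \<in> F" "ts ! 0 \<in> mu {vs ! 0, vs ! 1}"
    using edges vs(1,4) by auto
  ultimately show thesis using that by metis
qed

lemma strict_journey_single_time_is_edge:
  assumes "journey True E lam u v" and "\<And>e. lam e \<subseteq> {t}"
  shows "{u, v} \<in> E"
proof -
  obtain vs ts where vs: "length vs \<ge> 2" "hd vs = u" "last vs = v" "length ts = length vs - 1"
    and edges: "\<forall>i < length ts. {vs ! i, vs ! (i+1)} \<in> E \<and> ts ! i \<in> lam {vs ! i, vs ! (i+1)}"
    and increasing: "sorted_wrt (<) ts"
    using assms(1) unfolding journey_def by auto
  have "length ts = 1"
  proof (rule ccontr)
    assume "length ts \<noteq> 1"
    then have "1 < length ts" using vs(1,4) by linarith
    then have "ts ! 0 < ts ! 1" using increasing by (simp add: sorted_wrt_iff_nth_less)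
    moreover have "ts ! i = t" if "i < length ts" for i
      using edges assms(2) that by blast
    ultimately show False using \<open>1 < length ts\<close> by (metis less_trans less_irrefl zero_less_one)
  qed
  then have "length vs = 2" using vs(4) by simp
  then obtain x y where "vs = [x, y]" by (auto simp: numeral_2_eq_2 length_Suc_conv)
  then have "vs = [u, v]" using vs(2,3) by simp
  then show ?thesis using edges \<open>length ts = 1\<close> by auto
qed

lemma nonstrict_three_vertices_in_arcs:
  assumes tg: "temporal_graph {a, b, c} F mu" and "distinct [a, b, c]"
    and ab: "journey False F mu a b" and cb: "journey False F mu c b"
  shows "journey False F mu a c \<or> journey False F mu c a"
proof (rule ccontr)
  assume no_ac: "\<not> (journey False F mu a c \<or> journey False F mu c a)"
  have endpoint: "y \<in> {a, b, c}" if "{x, y} \<in> F" for x y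
    using tg that unfolding temporal_graph_def by (fastforce simp: doubleton_eq_iff)
  obtain w1 t1 where e1: "{a, w1} \<in> F" "t1 \<in> mu {a, w1}" "w1 \<noteq> a"
    using ab by (rule journey_first_edge)
  have "w1 \<noteq> c" using e1 journey_edge no_ac by metis
  with e1 endpoint have "w1 = b" by blast
  obtain w2 t2 where e2: "{c, w2} \<in> F" "t2 \<in> mu {c, w2}" "w2 \<noteq> c"
    using cb by (rule journey_first_edge)
  have "w2 \<noteq> a" using e2 journey_edge no_ac by metis
  with e2 endpoint have "w2 = b" by blast
  have "{b, c} = {c, b}" "{b, a} = {a, b}" by auto
  then have "journey False F mu a c \<or> journey False F mu c a"
    using e1 e2 \<open>w1 = b\<close> \<open>w2 = b\<close> \<open>distinct [a, b, c]\<close>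
      journey_two_edges[of a b F t1 mu c t2] journey_two_edges[of c b F t2 mu a t1]
    by (cases "t1 \<le> t2") auto
  with no_ac show False ..
qed

lemma digraph_iso_reach_arcs_journey:
  assumes "digraph_iso V (reach_arcs s V E lam) W (reach_arcs s' W F mu)"
  obtains f where "bij_betw f V W"
    and "\<And>u v. u \<in> V \<Longrightarrow> v \<in> V \<Longrightarrow> u \<noteq> v \<Longrightarrow>
           journey s E lam u v \<longleftrightarrow> journey s' F mu (f u) (f v)"
proof -
  obtain f where bij: "bij_betw f V W"
    and arcs: "\<forall>u\<in>V. \<forall>v\<in>V. (u, v) \<in> reach_arcs s V E lam \<longleftrightarrow> (f u, f v) \<in> reach_arcs s' W F mu"
    using assms unfolding digraph_iso_def by blast
  have "journey s E lam u v \<longleftrightarrow> journey s' F mu (f u) (f v)"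
    if "u \<in> V" "v \<in> V" "u \<noteq> v" for u v
  proof -
    have "f u \<in> W" "f v \<in> W" "f u \<noteq> f v"
      using bij that by (auto simp: bij_betw_def inj_on_eq_iff)
    then show ?thesis using arcs that unfolding reach_arcs_def by auto
  qed
  with bij that show thesis by blast
qed

lemma temporal_graph_path3:
  "temporal_graph {0::nat, 1, 2} {{0, 1}, {1, 2}} (\<lambda>_. {1})"
  unfolding temporal_graph_def
proof (intro conjI ballI)
  fix e :: "nat set" assume "e \<in> {{0, 1}, {1, 2}}"
  then consider "e = {0, 1}" | "e = {1, 2}" by blast
  then show "\<exists>u v. u \<in> {0::nat, 1, 2} \<and> v \<in> {0, 1, 2} \<and> u \<noteq> v \<and> e = {u, v}"
    by cases (intro exI[of _ 0] exI[of _ 1], simp, intro exI[of _ 1] exI[of _ 2], simp)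
qed auto

theorem mainTheorem4:
  shows "\<exists>(V :: nat set) E lam. temporal_graph V E lam \<and> simple_tg E lam \<and>
    (\<forall>(W :: 'b set) F mu. temporal_graph W F mu \<longrightarrow>
       \<not> digraph_iso V (reach_arcs True V E lam) W (reach_arcs False W F mu))"
proof (intro exI conjI allI impI notI)
  let ?V = "{0::nat, 1, 2}" and ?E = "{{0::nat, 1}, {1, 2}}" and ?lam = "\<lambda>_::nat set. {1::nat}"
  show "temporal_graph ?V ?E ?lam" by (rule temporal_graph_path3)
  show "simple_tg ?E ?lam" unfolding simple_tg_def by simp
  fix W :: "'b set" and F mu
  assume tg: "temporal_graph W F mu"
    and iso: "digraph_iso ?V (reach_arcs True ?V ?E ?lam) W (reach_arcs False W F mu)"
  obtain f where bij: "bij_betw f ?V W"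
    and transfer: "\<And>u v. u \<in> ?V \<Longrightarrow> v \<in> ?V \<Longrightarrow> u \<noteq> v \<Longrightarrow>
           journey True ?E ?lam u v \<longleftrightarrow> journey False F mu (f u) (f v)"
    using iso by (rule digraph_iso_reach_arcs_journey) blast
  have W: "W = {f 0, f 1, f 2}" and "distinct [f 0, f 1, f 2]"
    using bij by (auto simp: bij_betw_def inj_on_eq_iff)
  have "journey True ?E ?lam 0 1" "journey True ?E ?lam 2 1"
    by (rule journey_edge; auto simp: insert_commute)+
  then have "journey False F mu (f 0) (f 1)" "journey False F mu (f 2) (f 1)"
    using transfer by auto
  then have "journey False F mu (f 0) (f 2) \<or> journey False F mu (f 2) (f 0)"
    by (rule nonstrict_three_vertices_in_arcs[OF tg[unfolded W] \<open>distinct [f 0, f 1, f 2]\<close>])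
  then have "journey True ?E ?lam 0 2 \<or> journey True ?E ?lam 2 0"
    using transfer by auto
  then show False
    using strict_journey_single_time_is_edge[of ?E ?lam 0 2 1]
      strict_journey_single_time_is_edge[of ?E ?lam 2 0 1]
    by (auto simp: doubleton_eq_iff)
qed

end
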